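(* Let $h>0$ satisfy $L_eh^2\le1/9$, where $L_e=L+2\epsilon\tilde L$. For $x,v\in\mathbb{R}^{Nd}$ and $\mathcal U_0\sim\mathrm{Unif}[0,1]$, let $Q_h(x,v)=x+hv-\frac{h^2}2\nabla U(x+h\mathcal U_0v)$ and $P_h(x,v)=v-h\nabla U(x+h\mathcal U_0v)$ (one step of the randomized integrator). Then $$\sum_{\ell=1}^N\big|\!\big|\!\big|\mathbb{E}[(Q^\ell_h(x,v),P^\ell_h(x,v))]-(q^\ell_h(x,v),p^\ell_h(x,v))\big|\!\big|\!\big|^2\le7(L_eh^2)^3\sum_{\ell=1}^N\Big(|\!|\!|(x^\ell,v^\ell)|\!|\!|^2+\frac13L_e^{-2}\epsilon^2\mathbf W_0^2\Big),$$ where $\mathbf W_0=|\nabla_1W(0,0)|$.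
   Context: Standing assumptions: $\epsilon\ge0$; $V:\mathbb{R}^d\to\mathbb{R}$, $W:\mathbb{R}^d\times\mathbb{R}^d\to\mathbb{R}$ are $C^1$, $\nabla_1W$ the gradient in the first argument, constants $L>0$, $\tilde L\ge0$ with: (a) $V(0)=0$, $V\ge0$; (b) $|\nabla V(x)-\nabla V(y)|\le L|x-y|$; (d) $W$ symmetric, $|\nabla_1W(x,y)-\nabla_1W(\tilde x,\tilde y)|\le\tilde L(|x-\tilde x|+|y-\tilde y|)$. Points of $\mathbb{R}^{Nd}$: $x=(x^1,\dots,x^N)$. $U(x)=\sum_i\big(V(x^i)+\frac\epsilon{2N}\sum_jW(x^i,x^j)\big)$, $\nabla U=(\nabla_1U,\dots,\nabla_NU)$ with $\nabla_iU=\partial U/\partial x^i$. Exact flow $(q_t,p_t)(x,v)$: $\dot q^i_t=p^i_t$, $\dot p^i_t=-\nabla_iU(q_t)$, $(q_0,p_0)=(x,v)$. For $(a,b)\in\mathbb{R}^{2d}$, $|\!|\!|(a,b)|\!|\!|^2=|a|^2+L_e^{-1}|b|^2$. *)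

theory Defs
  imports "HOL-Analysis.Analysis"
begin

text \<open>Configurations of N particles in R^d: elements of 'd ^ 'n, with 'n a finite
  index type of cardinality N and 'd a Euclidean space (R^d).\<close>

definition Upot :: "('d \<Rightarrow> real) \<Rightarrow> ('d \<Rightarrow> 'd \<Rightarrow> real) \<Rightarrow> real \<Rightarrow> ('d ^ 'n::finite) \<Rightarrow> real" where
  "Upot V W eps x = (\<Sum>i\<in>UNIV. V (x $ i) + eps / (2 * real CARD('n)) * (\<Sum>j\<in>UNIV. W (x $ i) (x $ j)))"

definition tnorm2 :: "real \<Rightarrow> 'd::real_normed_vector \<Rightarrow> 'd \<Rightarrow> real" where
  "tnorm2 Le a b = (norm a)^2 + (norm b)^2 / Le"

text \<open>One step of the randomized integrator, for the realisation u of U_0.\<close>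
definition Qstep :: "(('d::real_normed_vector) ^ 'n::finite \<Rightarrow> 'd ^ 'n) \<Rightarrow> real \<Rightarrow> 'd ^ 'n \<Rightarrow> 'd ^ 'n \<Rightarrow> real \<Rightarrow> 'd ^ 'n" where
  "Qstep gU h x v u = x + h *\<^sub>R v - (h^2/2) *\<^sub>R gU (x + (h*u) *\<^sub>R v)"

definition Pstep :: "(('d::real_normed_vector) ^ 'n::finite \<Rightarrow> 'd ^ 'n) \<Rightarrow> real \<Rightarrow> 'd ^ 'n \<Rightarrow> 'd ^ 'n \<Rightarrow> real \<Rightarrow> 'd ^ 'n" where
  "Pstep gU h x v u = v - h *\<^sub>R gU (x + (h*u) *\<^sub>R v)"

end

theory Submission
  imports Defs
begin

(* Averaging over the uniform time U_0 turns one step of the randomized integrator into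
   (x + (h/2) (v + A), A) with A = v - int_0^h grad U (x + s v) ds: the velocity is updated with the
   exact integral of the force along the free-flight line x + s v, the position by the trapezoidal
   rule.  The gradient of U is the mean-field force grad V (x^i) + (eps/N) sum_j grad_1 W (x^i, x^j),
   which is L_e-Lipschitz (averaging is a contraction in l^2) and has norm at most
   L_e |x| + eps sqrt N W_0.  If B bounds the force along the exact trajectory, the mean value
   inequality shows that the exact position stays within t^2 B/2 of free flight, hence the velocity
   error is at most L_e B t^3/6 and the position error at most L_e B t^4/24 + L_e |v| t^3/12.
   Bounding B through max_t |q_t| and using L_e h^2 <= 1/9 to absorb the implicit term gives the
   estimate. *)

definition mean_field_force ::
  "('d::real_normed_vector \<Rightarrow> 'd) \<Rightarrow> ('d \<Rightarrow> 'd \<Rightarrow> 'd) \<Rightarrow> real \<Rightarrow> 'd ^ 'n::finite \<Rightarrow> 'd ^ 'n" where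
  "mean_field_force gV gW eps y = (\<chi> k. gV (y$k) + (eps / real CARD('n)) *\<^sub>R (\<Sum>j\<in>UNIV. gW (y$k) (y$j)))"

lemma continuous_on_jointly_lipschitz:
  fixes f :: "'a::real_normed_vector \<Rightarrow> 'b::real_normed_vector \<Rightarrow> 'c::real_normed_vector"
  assumes lip: "\<And>y z y' z'. norm (f y z - f y' z') \<le> C * (norm (y - y') + norm (z - z'))"
    and C: "C \<ge> 0"
  shows "continuous_on UNIV (\<lambda>p. f (fst p) (snd p))"
proof (rule lipschitz_on_continuous_on[of "2 * C"], unfold lipschitz_on_def, safe)
  show "0 \<le> 2 * C" using C by simp
  fix p r :: "'a \<times> 'b"
  have "dist (f (fst p) (snd p)) (f (fst r) (snd r)) \<le> C * (dist (fst p) (fst r) + dist (snd p) (snd r))"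
    using lip by (simp add: dist_norm)
  also have "\<dots> \<le> C * (dist p r + dist p r)"
    using C by (intro mult_left_mono add_mono dist_fst_le dist_snd_le)
  finally show "dist (f (fst p) (snd p)) (f (fst r) (snd r)) \<le> 2 * C * dist p r" by simp
qed

lemma has_derivative_symmetric_pair_potential:
  fixes W :: "'d::euclidean_space \<Rightarrow> 'd \<Rightarrow> real" and gW :: "'d \<Rightarrow> 'd \<Rightarrow> 'd"
  assumes W_diff: "\<And>y z. ((\<lambda>a. W a z) has_derivative (\<lambda>b. gW y z \<bullet> b)) (at y)"
    and W_sym: "\<And>y z. W y z = W z y"
    and gW_cont: "continuous_on UNIV (\<lambda>p. gW (fst p) (snd p))"
  shows "((\<lambda>p. W (fst p) (snd p)) has_derivative (\<lambda>t. gW a b \<bullet> fst t + gW b a \<bullet> snd t)) (at (a, b))"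
proof -
  have "continuous_on UNIV (\<lambda>p. gW (snd p) (fst p))"
    using continuous_on_compose[OF continuous_on_swap gW_cont[THEN continuous_on_subset]]
    by (simp add: o_def)
  then have cont: "continuous_on UNIV (\<lambda>p. blinfun_inner_left (gW (snd p) (fst p)))"
    by (intro continuous_intros)
  have second: "((\<lambda>z. W y z) has_derivative blinfun_inner_left (gW z y)) (at z within UNIV)" for y z
    using W_diff[where y=z and z=y] by (simp add: W_sym[of y] inner_commute)
  have "((\<lambda>(y, z). W y z) has_derivative (\<lambda>(ty, tz). gW a b \<bullet> ty + blinfun_inner_left (gW b a) tz))
      (at (a, b) within UNIV \<times> UNIV)"
    by (rule has_derivative_partialsI[where fy="\<lambda>y z. blinfun_inner_left (gW z y)"])
       (use W_diff second cont in \<open>auto simp: continuous_on_eq_continuous_at case_prod_unfold\<close>)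
  then show ?thesis by (simp add: case_prod_unfold inner_commute)
qed

lemma has_derivative_Upot:
  fixes V :: "'d::euclidean_space \<Rightarrow> real" and gV :: "'d \<Rightarrow> 'd"
    and W :: "'d \<Rightarrow> 'd \<Rightarrow> real" and gW :: "'d \<Rightarrow> 'd \<Rightarrow> 'd"
    and y :: "'d ^ 'n::finite"
  assumes V_diff: "\<And>y. (V has_derivative (\<lambda>z. gV y \<bullet> z)) (at y)"
    and W_deriv: "\<And>a b. ((\<lambda>p. W (fst p) (snd p)) has_derivative
      (\<lambda>t. gW a b \<bullet> fst t + gW b a \<bullet> snd t)) (at (a, b))"
  shows "(Upot V W eps has_derivative (\<lambda>z. \<Sum>i\<in>UNIV. gV (y$i) \<bullet> z$i + eps / (2 * real CARD('n)) *
            (\<Sum>j\<in>UNIV. gW (y$i) (y$j) \<bullet> z$i + gW (y$j) (y$i) \<bullet> z$j))) (at y)"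
proof -
  have nth: "((\<lambda>x::'d^'n. x$i) has_derivative (\<lambda>x. x$i)) (at y)" for i
    by (rule bounded_linear_imp_has_derivative) (rule bounded_linear_vec_nth)
  have dV: "((\<lambda>x. V (x$i)) has_derivative (\<lambda>z. gV (y$i) \<bullet> z$i)) (at y)" for i
    using has_derivative_compose[OF nth V_diff] .
  have dW: "((\<lambda>x. W (x$i) (x$j)) has_derivative
      (\<lambda>z. gW (y$i) (y$j) \<bullet> z$i + gW (y$j) (y$i) \<bullet> z$j)) (at y)" for i j
    using has_derivative_compose[OF has_derivative_Pair[OF nth nth] W_deriv[of "y$i" "y$j"]] by simp
  show ?thesis
    unfolding Upot_def[abs_def]
    by (intro has_derivative_sum has_derivative_add dV has_derivative_mult_right dW)
qed

lemma Upot_gradient_eq_mean_field_force: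
  fixes V :: "'d::euclidean_space \<Rightarrow> real" and gV :: "'d \<Rightarrow> 'd"
    and W :: "'d \<Rightarrow> 'd \<Rightarrow> real" and gW :: "'d \<Rightarrow> 'd \<Rightarrow> 'd"
    and gU :: "'d ^ 'n::finite \<Rightarrow> 'd ^ 'n"
  assumes V_diff: "\<And>y. (V has_derivative (\<lambda>z. gV y \<bullet> z)) (at y)"
    and W_diff: "\<And>y z. ((\<lambda>a. W a z) has_derivative (\<lambda>b. gW y z \<bullet> b)) (at y)"
    and W_sym: "\<And>y z. W y z = W z y"
    and gW_cont: "continuous_on UNIV (\<lambda>p. gW (fst p) (snd p))"
    and U_grad: "\<And>y. (Upot V W eps has_derivative (\<lambda>z. gU y \<bullet> z)) (at y)"
  shows "gU = mean_field_force gV gW eps"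
proof
  fix y
  let ?N = "real CARD('n)"
  note U_deriv = has_derivative_Upot[OF V_diff has_derivative_symmetric_pair_potential[OF W_diff W_sym gW_cont]]
  have "gU y \<bullet> z = mean_field_force gV gW eps y \<bullet> z" for z
  proof -
    have "gU y \<bullet> z = (\<Sum>i\<in>UNIV. gV (y$i) \<bullet> z$i) + eps / (2 * ?N) *
            ((\<Sum>i\<in>UNIV. \<Sum>j\<in>UNIV. gW (y$i) (y$j) \<bullet> z$i)
              + (\<Sum>i\<in>UNIV. \<Sum>j\<in>UNIV. gW (y$j) (y$i) \<bullet> z$j))"
      using has_derivative_unique[OF U_grad[of y] U_deriv, THEN fun_cong, of z]
      by (simp only: sum.distrib sum_distrib_left distrib_left)
    also have "\<dots> = (\<Sum>i\<in>UNIV. gV (y$i) \<bullet> z$i) + eps / ?N * (\<Sum>i\<in>UNIV. \<Sum>j\<in>UNIV. gW (y$i) (y$j) \<bullet> z$i)"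
      unfolding sum.swap[of "\<lambda>j i. gW (y$i) (y$j) \<bullet> z$i"] by simp
    also have "\<dots> = mean_field_force gV gW eps y \<bullet> z"
      unfolding mean_field_force_def inner_vec_def
      by (simp add: inner_add_left inner_sum_left sum.distrib sum_distrib_left)
    finally show ?thesis .
  qed
  then show "gU y = mean_field_force gV gW eps y" using vector_eq_rdot by blast
qed

lemma L2_set_add_mean_le:
  fixes d :: "'n::finite \<Rightarrow> real"
  assumes d: "\<And>k. 0 \<le> d k" and a: "0 \<le> a" and b: "0 \<le> b"
  shows "L2_set (\<lambda>k. a * d k + b / real CARD('n) * (\<Sum>j\<in>UNIV. d j)) UNIV \<le> (a + b) * L2_set d UNIV"
proof -
  let ?N = "real CARD('n)"
  let ?m = "b / ?N * (\<Sum>j\<in>UNIV. d j)"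
  have "(\<Sum>j\<in>UNIV. d j) \<le> sqrt ?N * L2_set d UNIV"
    using L2_set_mult_ineq[of d "\<lambda>_. 1" UNIV] d by (simp add: L2_set_constant mult.commute)
  then have "sqrt ?N * (b / ?N) * (\<Sum>j\<in>UNIV. d j) \<le> sqrt ?N * (b / ?N) * (sqrt ?N * L2_set d UNIV)"
    using b by (intro mult_left_mono) auto
  then have "sqrt ?N * ?m \<le> sqrt ?N * (b / ?N) * (sqrt ?N * L2_set d UNIV)"
    by (simp only: mult.assoc)
  also have "\<dots> = b * L2_set d UNIV"
    by (simp add: field_simps)
  finally have mean: "sqrt ?N * ?m \<le> b * L2_set d UNIV" .
  have "L2_set (\<lambda>k. a * d k + ?m) UNIV \<le> L2_set (\<lambda>k. a * d k) UNIV + L2_set (\<lambda>k::'n. ?m) UNIV"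
    by (rule L2_set_triangle_ineq)
  also have "\<dots> = a * L2_set d UNIV + sqrt ?N * ?m"
    using a b d by (simp add: L2_set_right_distrib L2_set_constant sum_nonneg)
  also have "\<dots> \<le> (a + b) * L2_set d UNIV"
    using mean by (simp add: distrib_right)
  finally show ?thesis .
qed

lemma lipschitz_mean_field_force:
  fixes gV :: "'d::real_normed_vector \<Rightarrow> 'd" and gW :: "'d \<Rightarrow> 'd \<Rightarrow> 'd"
    and y z :: "'d ^ 'n::finite"
  assumes eps: "0 \<le> eps" and L: "0 \<le> L" and Lt: "0 \<le> Lt"
    and V_lip: "\<And>y z. norm (gV y - gV z) \<le> L * norm (y - z)"
    and W_lip: "\<And>y z y' z'. norm (gW y z - gW y' z') \<le> Lt * (norm (y - y') + norm (z - z'))"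
  shows "norm (mean_field_force gV gW eps y - mean_field_force gV gW eps z) \<le> (L + 2 * eps * Lt) * norm (y - z)"
proof -
  let ?N = "real CARD('n)"
  define d where "d k = norm (y$k - z$k)" for k
  have component: "norm ((mean_field_force gV gW eps y - mean_field_force gV gW eps z)$k)
      \<le> (L + eps * Lt) * d k + eps * Lt / ?N * (\<Sum>j\<in>UNIV. d j)" for k
  proof -
    have "norm ((mean_field_force gV gW eps y - mean_field_force gV gW eps z)$k)
        = norm ((gV (y$k) - gV (z$k)) + (eps / ?N) *\<^sub>R (\<Sum>j\<in>UNIV. gW (y$k) (y$j) - gW (z$k) (z$j)))"
      by (simp add: mean_field_force_def sum_subtractf scaleR_diff_right algebra_simps)
    also have "\<dots> \<le> norm (gV (y$k) - gV (z$k)) + eps / ?N * norm (\<Sum>j\<in>UNIV. gW (y$k) (y$j) - gW (z$k) (z$j))"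
      using eps by (intro order_trans[OF norm_triangle_ineq]) simp
    also have "\<dots> \<le> L * d k + eps / ?N * (\<Sum>j\<in>UNIV. Lt * (d k + d j))"
      using eps V_lip W_lip unfolding d_def
      by (intro add_mono mult_left_mono order_trans[OF norm_sum sum_mono]) auto
    also have "\<dots> = (L + eps * Lt) * d k + eps * Lt / ?N * (\<Sum>j\<in>UNIV. d j)"
      by (simp add: sum.distrib sum_distrib_left sum_divide_distrib algebra_simps)
    finally show ?thesis .
  qed
  have "norm (mean_field_force gV gW eps y - mean_field_force gV gW eps z)
      \<le> L2_set (\<lambda>k. (L + eps * Lt) * d k + eps * Lt / ?N * (\<Sum>j\<in>UNIV. d j)) UNIV"
    unfolding norm_vec_def by (rule L2_set_mono) (use component in auto)
  also have "\<dots> \<le> (L + eps * Lt + eps * Lt) * L2_set d UNIV"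
    using L eps Lt by (intro L2_set_add_mean_le) (auto simp: d_def)
  also have "L2_set d UNIV = norm (y - z)"
    by (simp add: norm_vec_def d_def[abs_def])
  finally show ?thesis by (simp add: algebra_simps)
qed

lemma norm_mean_field_force_le:
  fixes gV :: "'d::real_normed_vector \<Rightarrow> 'd" and gW :: "'d \<Rightarrow> 'd \<Rightarrow> 'd"
    and y :: "'d ^ 'n::finite"
  assumes eps: "0 \<le> eps" and L: "0 \<le> L" and Lt: "0 \<le> Lt" and gV0: "gV 0 = 0"
    and V_lip: "\<And>y z. norm (gV y - gV z) \<le> L * norm (y - z)"
    and W_lip: "\<And>y z y' z'. norm (gW y z - gW y' z') \<le> Lt * (norm (y - y') + norm (z - z'))"
  shows "norm (mean_field_force gV gW eps y)
    \<le> (L + 2 * eps * Lt) * norm y + eps * norm (gW 0 0) * sqrt (real CARD('n))"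
proof -
  have "norm (mean_field_force gV gW eps (0 :: 'd ^ 'n)) = eps * norm (gW 0 0) * sqrt (real CARD('n))"
    using eps by (simp add: mean_field_force_def gV0 norm_vec_def L2_set_constant sum_constant_scaleR)
  moreover have "norm (mean_field_force gV gW eps y - mean_field_force gV gW eps 0) \<le> (L + 2 * eps * Lt) * norm y"
    using lipschitz_mean_field_force[OF eps L Lt V_lip W_lip, of y 0] by simp
  ultimately show ?thesis
    using norm_triangle_sub[of "mean_field_force gV gW eps y" "mean_field_force gV gW eps 0"] by simp
qed

lemma gradient_eq_0_at_minimum:
  fixes f :: "'a::real_inner \<Rightarrow> real"
  assumes "(f has_derivative (\<lambda>z. g \<bullet> z)) (at x)" and "\<And>y. f x \<le> f y"
  shows "g = 0"
proof -
  have "(\<lambda>z. g \<bullet> z) = (\<lambda>z. 0)"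
    by (rule differential_zero_maxmin[of x UNIV f]) (use assms in auto)
  then show ?thesis by (metis inner_eq_zero_iff)
qed

lemma differentiable_bound_Icc:
  fixes f f' :: "real \<Rightarrow> 'a::real_normed_vector" and \<phi> \<phi>' :: "real \<Rightarrow> real"
  assumes T: "0 \<le> T" and S: "{0..T} \<subseteq> S"
    and f': "\<And>s. s \<in> {0..T} \<Longrightarrow> (f has_vector_derivative f' s) (at s within S)"
    and \<phi>': "\<And>s. s \<in> {0..T} \<Longrightarrow> (\<phi> has_real_derivative \<phi>' s) (at s)"
    and bound: "\<And>s. s \<in> {0..T} \<Longrightarrow> norm (f' s) \<le> \<phi>' s"
  shows "norm (f T - f 0) \<le> \<phi> T - \<phi> 0"
proof (cases "T = 0")
  case False
  have f'_Icc: "(f has_vector_derivative f' s) (at s within {0..T})" if "s \<in> {0..T}" for s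
    using has_vector_derivative_within_subset[OF f'[OF that] S] .
  show ?thesis
  proof (rule differentiable_bound_general[of 0 T f \<phi> f' \<phi>'])
    show "0 < T" using T False by simp
    show "continuous_on {0..T} f"
      using f'_Icc has_vector_derivative_continuous continuous_on_eq_continuous_within by blast
    show "continuous_on {0..T} \<phi>"
      using \<phi>' by (meson DERIV_continuous continuous_at_imp_continuous_on)
    fix s assume s: "0 < s" "s < T"
    then show "(f has_vector_derivative f' s) (at s)"
      using f'_Icc[of s] at_within_Icc_at[of 0 s T] by simp
    show "(\<phi> has_vector_derivative \<phi>' s) (at s)"
      using \<phi>'[of s] s by (simp add: has_real_derivative_iff_has_vector_derivative)
    show "norm (f' s) \<le> \<phi>' s" using bound s by simp
  qed
qed simp

lemma norm_rectangle_rule_error_le: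
  fixes g :: "real \<Rightarrow> 'a::banach"
  assumes t: "0 \<le> t" and g: "continuous_on {0..t} g"
    and lip: "\<And>s. s \<in> {0..t} \<Longrightarrow> norm (g t - g s) \<le> C * (t - s)"
  shows "norm (t *\<^sub>R g t - integral {0..t} g) \<le> C * t^2 / 2"
proof -
  have "norm ((t *\<^sub>R g t - integral {0..t} g) - (0 *\<^sub>R g t - integral {0..0} g))
      \<le> C * (t * t - t^2 / 2) - C * (t * 0 - 0^2 / 2)"
  proof (rule differentiable_bound_Icc[OF t order_refl])
    fix s assume s: "s \<in> {0..t}"
    show "((\<lambda>r. r *\<^sub>R g t - integral {0..r} g) has_vector_derivative g t - g s) (at s within {0..t})"
      by (intro has_vector_derivative_diff integral_has_vector_derivative[OF g s])
         (auto intro!: derivative_eq_intros)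
    show "((\<lambda>r. C * (t * r - r^2 / 2)) has_real_derivative C * (t - s)) (at s)"
      by (auto intro!: derivative_eq_intros)
    show "norm (g t - g s) \<le> C * (t - s)" using lip[OF s] .
  qed
  then show ?thesis by (simp add: power2_eq_square)
qed

locale newtonian_flow =
  fixes G :: "'v::banach \<Rightarrow> 'v" and K h :: real and q p :: "real \<Rightarrow> 'v"
  assumes G_lipschitz: "\<And>y z. norm (G y - G z) \<le> K * norm (y - z)"
    and K_nonneg: "0 \<le> K"
    and q_ode: "\<And>t. t \<in> {0..h} \<Longrightarrow> (q has_vector_derivative p t) (at t within {0..h})"
    and p_ode: "\<And>t. t \<in> {0..h} \<Longrightarrow> (p has_vector_derivative - G (q t)) (at t within {0..h})"
begin

definition free_force :: "real \<Rightarrow> 'v" where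
  "free_force s = G (q 0 + s *\<^sub>R p 0)"

lemma continuous_on_q: "continuous_on {0..h} q"
  using q_ode has_vector_derivative_continuous continuous_on_eq_continuous_within by blast

lemma continuous_on_G: "continuous_on S G"
  by (rule lipschitz_on_continuous_on[of K])
     (use G_lipschitz K_nonneg in \<open>auto simp: lipschitz_on_def dist_norm\<close>)

lemma continuous_on_free_force: "continuous_on S free_force"
  unfolding free_force_def
  by (rule continuous_on_compose2[OF continuous_on_G]) (auto intro!: continuous_intros)

lemma has_vector_derivative_integral_free_force:
  "s \<in> {0..T} \<Longrightarrow> ((\<lambda>t. integral {0..t} free_force) has_vector_derivative free_force s) (at s within {0..T})"
  by (rule integral_has_vector_derivative[OF continuous_on_free_force])

lemma norm_free_force_diff_le: "norm (free_force t - free_force s) \<le> K * norm (p 0) * \<bar>t - s\<bar>"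
proof -
  have "norm (free_force t - free_force s) \<le> K * norm ((t - s) *\<^sub>R p 0)"
    using G_lipschitz[of "q 0 + t *\<^sub>R p 0" "q 0 + s *\<^sub>R p 0"]
    by (simp add: free_force_def scaleR_diff_left)
  then show ?thesis by (simp add: mult_ac)
qed

context
  fixes B :: real
  assumes force_bound: "\<And>t. t \<in> {0..h} \<Longrightarrow> norm (G (q t)) \<le> B"
begin

lemma velocity_drift:
  assumes t: "t \<in> {0..h}"
  shows "norm (p t - p 0) \<le> t * B"
proof -
  have "norm (p t - p 0) \<le> t * B - 0 * B"
  proof (rule differentiable_bound_Icc[of t "{0..h}" p "\<lambda>s. - G (q s)"])
    fix s assume s: "s \<in> {0..t}"
    then have "s \<in> {0..h}" using t by auto
    then show "(p has_vector_derivative - G (q s)) (at s within {0..h})"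
      and "norm (- G (q s)) \<le> B"
      using p_ode force_bound by auto
    show "((\<lambda>s. s * B) has_real_derivative B) (at s)"
      by (auto intro!: derivative_eq_intros)
  qed (use t in auto)
  then show ?thesis by simp
qed

lemma position_drift:
  assumes t: "t \<in> {0..h}"
  shows "norm (q t - q 0 - t *\<^sub>R p 0) \<le> t^2 / 2 * B"
proof -
  have "norm ((q t - q 0 - t *\<^sub>R p 0) - (q 0 - q 0 - 0 *\<^sub>R p 0)) \<le> t^2 / 2 * B - 0^2 / 2 * B"
  proof (rule differentiable_bound_Icc[of t "{0..h}" _ "\<lambda>s. p s - p 0"])
    fix s assume s: "s \<in> {0..t}"
    then have sh: "s \<in> {0..h}" using t by auto
    show "((\<lambda>s. q s - q 0 - s *\<^sub>R p 0) has_vector_derivative p s - p 0) (at s within {0..h})"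
      using q_ode[OF sh] by (auto intro!: derivative_eq_intros)
    show "((\<lambda>s. s^2 / 2 * B) has_real_derivative s * B) (at s)"
      by (auto intro!: derivative_eq_intros)
    show "norm (p s - p 0) \<le> s * B" using velocity_drift[OF sh] .
  qed (use t in auto)
  then show ?thesis by simp
qed

lemma velocity_error:
  assumes t: "t \<in> {0..h}"
  shows "norm (p t - (p 0 - integral {0..t} free_force)) \<le> K * B * t^3 / 6"
proof -
  have "norm ((p t - (p 0 - integral {0..t} free_force)) - (p 0 - (p 0 - integral {0..0} free_force)))
      \<le> K * B * t^3 / 6 - K * B * 0^3 / 6"
  proof (rule differentiable_bound_Icc[of t "{0..h}" _ "\<lambda>s. free_force s - G (q s)"])
    fix s assume s: "s \<in> {0..t}"
    then have sh: "s \<in> {0..h}" using t by auto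
    show "((\<lambda>s. p s - (p 0 - integral {0..s} free_force)) has_vector_derivative free_force s - G (q s))
        (at s within {0..h})"
      using p_ode[OF sh] has_vector_derivative_integral_free_force[OF sh]
      by (auto intro!: derivative_eq_intros)
    show "((\<lambda>s. K * B * s^3 / 6) has_real_derivative K * B * s^2 / 2) (at s)"
      by (auto intro!: derivative_eq_intros)
    have "norm (free_force s - G (q s)) \<le> K * norm (q s - q 0 - s *\<^sub>R p 0)"
      using G_lipschitz[of "q 0 + s *\<^sub>R p 0" "q s"]
      by (simp add: free_force_def norm_minus_commute algebra_simps)
    also have "\<dots> \<le> K * (s^2 / 2 * B)"
      using position_drift[OF sh] K_nonneg by (rule mult_left_mono)
    finally show "norm (free_force s - G (q s)) \<le> K * B * s^2 / 2" by (simp add: mult_ac)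
  qed (use t in auto)
  then show ?thesis by simp
qed

lemma position_error:
  assumes t: "t \<in> {0..h}"
  shows "norm (q t - (q 0 + (t / 2) *\<^sub>R (p 0 + (p 0 - integral {0..t} free_force))))
    \<le> K * B * t^4 / 24 + K * norm (p 0) * t^3 / 12"
proof -
  define I where "I s = integral {0..s} free_force" for s
  have "norm ((q t - (q 0 + (t / 2) *\<^sub>R (p 0 + (p 0 - I t)))) - (q 0 - (q 0 + (0 / 2) *\<^sub>R (p 0 + (p 0 - I 0)))))
      \<le> (K * B * t^4 / 24 + K * norm (p 0) * t^3 / 12) - (K * B * 0^4 / 24 + K * norm (p 0) * 0^3 / 12)"
  proof (rule differentiable_bound_Icc[of t "{0..h}" _
        "\<lambda>s. (p s - (p 0 - I s)) + (1/2) *\<^sub>R (s *\<^sub>R free_force s - I s)"])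
    fix s assume s: "s \<in> {0..t}"
    then have sh: "s \<in> {0..h}" using t by auto
    have half: "(1/2::real) *\<^sub>R w + (1/2) *\<^sub>R w = w" for w :: 'v
      by (simp add: scaleR_add_left[symmetric])
    show "((\<lambda>s. q s - (q 0 + (s / 2) *\<^sub>R (p 0 + (p 0 - I s)))) has_vector_derivative
        (p s - (p 0 - I s)) + (1/2) *\<^sub>R (s *\<^sub>R free_force s - I s)) (at s within {0..h})"
      unfolding I_def using q_ode[OF sh] has_vector_derivative_integral_free_force[OF sh]
      by (auto intro!: derivative_eq_intros simp: algebra_simps half)
    show "((\<lambda>s. K * B * s^4 / 24 + K * norm (p 0) * s^3 / 12) has_real_derivative
        K * B * s^3 / 6 + K * norm (p 0) * s^2 / 4) (at s)"
      by (auto intro!: derivative_eq_intros simp: algebra_simps)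
    have "norm (free_force s - free_force r) \<le> K * norm (p 0) * (s - r)" if "r \<in> {0..s}" for r
      using norm_free_force_diff_le[of s r] that by simp
    then have "norm (s *\<^sub>R free_force s - I s) \<le> K * norm (p 0) * s^2 / 2"
      unfolding I_def using s by (intro norm_rectangle_rule_error_le continuous_on_free_force) auto
    then show "norm ((p s - (p 0 - I s)) + (1/2) *\<^sub>R (s *\<^sub>R free_force s - I s))
        \<le> K * B * s^3 / 6 + K * norm (p 0) * s^2 / 4"
      using velocity_error[OF sh] unfolding I_def
      by (intro order_trans[OF norm_triangle_ineq]) simp
  qed (use t in auto)
  then show ?thesis by (simp add: I_def)
qed

end

end

lemma integrator_error_arith_normalized:
  fixes a X Y Z S e d :: real
  assumes a: "0 < a" "a \<le> 1/9" and nonneg: "0 \<le> X" "0 \<le> Y" "0 \<le> Z" "0 \<le> S" "0 \<le> e"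
    and S: "S \<le> X + Y + Z + a * S / 2"
    and e: "e \<le> a^2 * S / 24 + a * Y / 12"
    and d: "d \<le> a^3 * S^2 / 36"
  shows "e^2 + d \<le> 7 * (a^3 * X^2 + a^2 * Y^2 + a^3 * Z^2 / 3)"
proof -
  have "a * S \<le> S" using a nonneg by (simp add: mult_left_le_one_le)
  then have "S \<le> 2 * (X + Y + Z)" using S by (simp add: field_simps)
  then have "S^2 \<le> (2 * (X + Y + Z))^2" using nonneg by (intro power_mono) auto
  also have "\<dots> \<le> 12 * (X^2 + Y^2 + Z^2)"
  proof -
    have "0 \<le> (X - Y)^2 + (Y - Z)^2 + (X - Z)^2" by simp
    then show ?thesis by (simp add: power2_eq_square algebra_simps)
  qed
  finally have S2: "S^2 \<le> 12 * (X^2 + Y^2 + Z^2)" .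
  have "e^2 \<le> (a^2 * S / 24 + a * Y / 12)^2" using e nonneg by (intro power_mono) auto
  also have "\<dots> \<le> a^4 * S^2 / 288 + a^2 * Y^2 / 72"
  proof -
    have "0 \<le> (a^2 * S / 24 - a * Y / 12)^2" by simp
    then show ?thesis by (simp add: power2_eq_square power4_eq_xxxx algebra_simps)
  qed
  finally have e2: "e^2 \<le> a^4 * S^2 / 288 + a^2 * Y^2 / 72" .
  have "a * (a^3 * S^2) \<le> 1/9 * (a^3 * S^2)" using a by (intro mult_right_mono) auto
  then have "a^4 * S^2 \<le> a^3 * S^2 / 9" by (simp add: power_numeral_reduce mult_ac)
  moreover have "0 \<le> a^3 * S^2" using a by simp
  ultimately have "e^2 + d \<le> a^3 * S^2 / 24 + a^2 * Y^2 / 72" using e2 d by linarith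
  also have "\<dots> \<le> a^3 * (X^2 + Y^2 + Z^2) / 2 + a^2 * Y^2 / 72"
    using S2 a by simp
  also have "\<dots> \<le> 7 * (a^3 * X^2 + a^2 * Y^2 + a^3 * Z^2 / 3)"
  proof -
    have "a^3 * Y^2 \<le> a^2 * Y^2" using a by (intro mult_right_mono power_decreasing) auto
    moreover have "0 \<le> a^3 * X^2" "0 \<le> a^3 * Z^2" "0 \<le> a^2 * Y^2" using a by auto
    ultimately show ?thesis unfolding distrib_left add_divide_distrib by linarith
  qed
  finally show ?thesis .
qed

lemma integrator_error_arith:
  fixes K h X Y Bc M e d :: real
  assumes K: "0 < K" and h: "0 < h" and step: "K * h^2 \<le> 1/9"
    and nonneg: "0 \<le> X" "0 \<le> Y" "0 \<le> Bc" "0 \<le> M" "0 \<le> e" "0 \<le> d"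
    and M: "M \<le> X + h * Y + h^2 / 2 * (K * M + Bc)"
    and e: "e \<le> K * (K * M + Bc) * h^4 / 24 + K * Y * h^3 / 12"
    and d: "d \<le> K * (K * M + Bc) * h^3 / 6"
  shows "e^2 + d^2 / K \<le> 7 * (K * h^2)^3 * (X^2 + Y^2 / K + Bc^2 / (3 * K^2))"
proof -
  define a S where "a = K * h^2" and "S = M + Bc / K"
  have KMB: "K * M + Bc = K * S" using K by (simp add: S_def field_simps)
  have "e^2 + d^2 / K \<le> 7 * (a^3 * X^2 + a^2 * (h * Y)^2 + a^3 * (Bc / K)^2 / 3)"
  proof (rule integrator_error_arith_normalized)
    show "S \<le> X + h * Y + Bc / K + a * S / 2"
      using M unfolding KMB by (simp add: S_def a_def power2_eq_square mult_ac)
    show "e \<le> a^2 * S / 24 + a * (h * Y) / 12"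
      using e unfolding KMB by (simp add: a_def power2_eq_square power3_eq_cube power4_eq_xxxx mult_ac)
    have "d^2 \<le> (K * (K * S) * h^3 / 6)^2"
      using d nonneg unfolding KMB by (intro power_mono) auto
    then show "d^2 / K \<le> a^3 * S^2 / 36"
      using K by (simp add: a_def field_simps power2_eq_square power3_eq_cube)
  qed (use K h step nonneg in \<open>auto simp: a_def S_def\<close>)
  also have "\<dots> = 7 * (K * h^2)^3 * (X^2 + Y^2 / K + Bc^2 / (3 * K^2))"
    using K by (simp add: a_def field_simps power2_eq_square power3_eq_cube)
  finally show ?thesis .
qed

lemma mean_integrator_error:
  fixes G :: "'v::banach \<Rightarrow> 'v" and q p :: "real \<Rightarrow> 'v" and K Bc h :: real
  assumes flow: "newtonian_flow G K h q p"
    and K: "0 < K" and Bc: "0 \<le> Bc" and h: "0 < h" and step: "K * h^2 \<le> 1/9"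
    and growth: "\<And>y. norm (G y) \<le> K * norm y + Bc"
  defines "A \<equiv> p 0 - integral {0..h} (\<lambda>s. G (q 0 + s *\<^sub>R p 0))"
  shows "tnorm2 K (q 0 + (h / 2) *\<^sub>R (p 0 + A) - q h) (A - p h)
    \<le> 7 * (K * h^2)^3 * (tnorm2 K (q 0) (p 0) + Bc^2 / (3 * K^2))"
proof -
  interpret newtonian_flow G K h q p by (fact flow)
  obtain tm where tm: "tm \<in> {0..h}" and q_max: "\<And>t. t \<in> {0..h} \<Longrightarrow> norm (q t) \<le> norm (q tm)"
    using continuous_attains_sup[OF compact_Icc _ continuous_on_norm[OF continuous_on_q]] h by auto
  define M where "M = norm (q tm)"
  have force_bound: "norm (G (q t)) \<le> K * M + Bc" if "t \<in> {0..h}" for t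
    using growth[of "q t"] mult_left_mono[OF q_max[OF that] less_imp_le[OF K]] unfolding M_def by simp
  have A: "A = p 0 - integral {0..h} free_force"
    by (simp add: A_def free_force_def[abs_def])
  have "M \<le> norm (q 0) + norm (tm *\<^sub>R p 0) + norm (q tm - q 0 - tm *\<^sub>R p 0)"
    using norm_triangle_le[of "q 0 + tm *\<^sub>R p 0" "q tm - q 0 - tm *\<^sub>R p 0"]
      norm_triangle_ineq[of "q 0" "tm *\<^sub>R p 0"]
    unfolding M_def by simp
  also have "\<dots> \<le> norm (q 0) + h * norm (p 0) + h^2 / 2 * (K * M + Bc)"
  proof -
    have "tm^2 / 2 * (K * M + Bc) \<le> h^2 / 2 * (K * M + Bc)"
      using tm K Bc by (intro mult_right_mono divide_right_mono power_mono) (auto simp: M_def)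
    then show ?thesis
      using position_drift[OF force_bound tm] tm mult_right_mono[of tm h "norm (p 0)"] by simp
  qed
  finally have M_le: "M \<le> norm (q 0) + h * norm (p 0) + h^2 / 2 * (K * M + Bc)" .
  have "norm (q 0 + (h / 2) *\<^sub>R (p 0 + A) - q h)^2 + norm (A - p h)^2 / K
    \<le> 7 * (K * h^2)^3 * (norm (q 0)^2 + norm (p 0)^2 / K + Bc^2 / (3 * K^2))"
  proof (rule integrator_error_arith[OF K h step _ _ Bc _ _ _ M_le])
    show "norm (q 0 + (h / 2) *\<^sub>R (p 0 + A) - q h) \<le> K * (K * M + Bc) * h^4 / 24 + K * norm (p 0) * h^3 / 12"
      using position_error[OF force_bound, of h] h unfolding A by (simp add: norm_minus_commute mult_ac)
    show "norm (A - p h) \<le> K * (K * M + Bc) * h^3 / 6"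
      using velocity_error[OF force_bound, of h] h unfolding A by (simp add: norm_minus_commute mult_ac)
  qed (auto simp: M_def)
  then show ?thesis by (simp add: tnorm2_def)
qed

lemma has_integral_free_flight_rescaled:
  fixes G :: "'v::banach \<Rightarrow> 'v"
  assumes G: "continuous_on UNIV G" and h: "0 < h"
  shows "((\<lambda>u. G (x + (h * u) *\<^sub>R v)) has_integral
    (1 / h) *\<^sub>R integral {0..h} (\<lambda>s. G (x + s *\<^sub>R v))) {0..1}"
proof -
  have "continuous_on {0..h} (\<lambda>s. G (x + s *\<^sub>R v))"
    by (rule continuous_on_compose2[OF G]) (auto intro!: continuous_intros)
  then have "((\<lambda>s. G (x + s *\<^sub>R v)) has_integral integral {0..h} (\<lambda>s. G (x + s *\<^sub>R v))) {0..h}"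
    by (rule integrable_integral[OF integrable_continuous_real])
  from has_integral_stretch_real[OF this, of h] h show ?thesis by simp
qed

lemma integral_Pstep:
  fixes gU :: "'d::banach ^ 'n::finite \<Rightarrow> 'd ^ 'n"
  assumes "continuous_on UNIV gU" and "0 < h"
  shows "integral {0..1} (\<lambda>u. Pstep gU h x v u) = v - integral {0..h} (\<lambda>s. gU (x + s *\<^sub>R v))"
proof (rule integral_unique)
  show "((\<lambda>u. Pstep gU h x v u) has_integral v - integral {0..h} (\<lambda>s. gU (x + s *\<^sub>R v))) {0..1}"
    using has_integral_diff[OF has_integral_const_real[of v 0 1]
        has_integral_cmul[OF has_integral_free_flight_rescaled[OF assms], of h]] \<open>0 < h\<close>
    by (simp add: Pstep_def)
qed

lemma integral_Qstep:
  fixes gU :: "'d::banach ^ 'n::finite \<Rightarrow> 'd ^ 'n"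
  assumes "continuous_on UNIV gU" and "0 < h"
  shows "integral {0..1} (\<lambda>u. Qstep gU h x v u)
    = x + (h / 2) *\<^sub>R (v + (v - integral {0..h} (\<lambda>s. gU (x + s *\<^sub>R v))))"
proof (rule integral_unique)
  have "h^2 / 2 / h = h / 2" and "(h / 2) *\<^sub>R v + (h / 2) *\<^sub>R v = h *\<^sub>R v"
    using \<open>0 < h\<close> by (simp_all add: power2_eq_square scaleR_add_left[symmetric])
  then show "((\<lambda>u. Qstep gU h x v u) has_integral
      x + (h / 2) *\<^sub>R (v + (v - integral {0..h} (\<lambda>s. gU (x + s *\<^sub>R v))))) {0..1}"
    using has_integral_diff[OF has_integral_const_real[of "x + h *\<^sub>R v" 0 1]
        has_integral_cmul[OF has_integral_free_flight_rescaled[OF assms, where x=x and v=v], of "h^2 / 2"]]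
    by (simp add: Qstep_def algebra_simps)
qed

lemma tnorm2_vec:
  fixes a b :: "'a::real_normed_vector ^ 'n::finite"
  shows "tnorm2 K a b = (\<Sum>l\<in>UNIV. tnorm2 K (a $ l) (b $ l))"
proof -
  have "norm w ^ 2 = (\<Sum>l\<in>UNIV. norm (w $ l) ^ 2)" for w :: "'a ^ 'n"
    by (simp add: norm_vec_def L2_set_def sum_nonneg)
  then show ?thesis by (simp add: tnorm2_def sum.distrib sum_divide_distrib)
qed

theorem mainTheorem14:
  fixes V :: "'d::euclidean_space \<Rightarrow> real"
    and gV :: "'d \<Rightarrow> 'd"
    and W :: "'d \<Rightarrow> 'd \<Rightarrow> real"
    and gW :: "'d \<Rightarrow> 'd \<Rightarrow> 'd"
    and gU :: "'d ^ 'n::finite \<Rightarrow> 'd ^ 'n"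
    and eps L Lt h :: real
    and x v :: "'d ^ 'n"
    and q p :: "real \<Rightarrow> 'd ^ 'n"
  assumes eps: "eps \<ge> 0"
    and L: "L > 0" and Lt: "Lt \<ge> 0"
    and V_diff: "\<And>y. (V has_derivative (\<lambda>z. gV y \<bullet> z)) (at y)"
    and V0: "V 0 = 0" and Vnn: "\<And>y. V y \<ge> 0"
    and V_lip: "\<And>y z. norm (gV y - gV z) \<le> L * norm (y - z)"
    and W_diff: "\<And>y z. ((\<lambda>a. W a z) has_derivative (\<lambda>b. gW y z \<bullet> b)) (at y)"
    and W_sym: "\<And>y z. W y z = W z y"
    and W_lip: "\<And>y z y' z'. norm (gW y z - gW y' z') \<le> Lt * (norm (y - y') + norm (z - z'))"
    and U_grad: "\<And>y. (Upot V W eps has_derivative (\<lambda>z. gU y \<bullet> z)) (at y)"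
    and h: "h > 0"
    and step: "(L + 2 * eps * Lt) * h^2 \<le> 1/9"
    and q0: "q 0 = x" and p0: "p 0 = v"
    and q_ode: "\<And>t. t \<in> {0..h} \<Longrightarrow> (q has_vector_derivative p t) (at t within {0..h})"
    and p_ode: "\<And>t. t \<in> {0..h} \<Longrightarrow> (p has_vector_derivative - gU (q t)) (at t within {0..h})"
  shows "(\<Sum>l\<in>UNIV.
            tnorm2 (L + 2 * eps * Lt)
              ((integral {0..1} (\<lambda>u. Qstep gU h x v u)) $ l - q h $ l)
              ((integral {0..1} (\<lambda>u. Pstep gU h x v u)) $ l - p h $ l))
         \<le> 7 * ((L + 2 * eps * Lt) * h^2)^3 *
           (\<Sum>l\<in>UNIV. tnorm2 (L + 2 * eps * Lt) (x $ l) (v $ l)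
              + 1/3 * (L + 2 * eps * Lt) powi (-2) * eps^2 * (norm (gW 0 0))^2)"
proof -
  define Le where "Le = L + 2 * eps * Lt"
  define Bc where "Bc = eps * norm (gW 0 0) * sqrt (real CARD('n))"
  have Le: "0 < Le" and Bc: "0 \<le> Bc"
    using L eps Lt by (simp_all add: Le_def Bc_def add_pos_nonneg)
  have gV0: "gV 0 = 0"
    using V0 Vnn by (intro gradient_eq_0_at_minimum[OF V_diff]) auto
  have gU: "gU = mean_field_force gV gW eps"
    by (intro Upot_gradient_eq_mean_field_force[OF V_diff W_diff W_sym _ U_grad]
        continuous_on_jointly_lipschitz[OF W_lip Lt])
  have flow: "newtonian_flow gU Le h q p"
    using lipschitz_mean_field_force[OF eps _ Lt V_lip W_lip] L Le q_ode p_ode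
    unfolding gU Le_def by unfold_locales auto
  have growth: "norm (gU y) \<le> Le * norm y + Bc" for y
    using norm_mean_field_force_le[OF eps _ Lt gV0 V_lip W_lip] L unfolding gU Le_def Bc_def by simp
  have gU_cont: "continuous_on UNIV gU"
    by (rule newtonian_flow.continuous_on_G[OF flow])
  have "tnorm2 Le (integral {0..1} (\<lambda>u. Qstep gU h x v u) - q h) (integral {0..1} (\<lambda>u. Pstep gU h x v u) - p h)
      \<le> 7 * (Le * h^2)^3 * (tnorm2 Le x v + Bc^2 / (3 * Le^2))"
    using mean_integrator_error[OF flow Le Bc h step[folded Le_def] growth]
    unfolding integral_Qstep[OF gU_cont h] integral_Pstep[OF gU_cont h] q0 p0 .
  moreover have "Bc^2 / (3 * Le^2) = real CARD('n) * (1/3 * Le powi (-2) * eps^2 * (norm (gW 0 0))^2)"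
    using Le by (simp add: Bc_def power_int_minus power_mult_distrib field_simps)
  ultimately show ?thesis
    by (simp add: tnorm2_vec sum.distrib flip: Le_def)
qed

end
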